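(* Let $G=GL_n(\mathbb C)$, $\mathfrak g=\mathfrak{gl}_n(\mathbb C)$, $V=\mathbb C^n$, $F\subset\mathcal D_{\mathfrak g}^G$ of (H-C)-type, and let $\mathcal N_{F,\mathfrak g}$ be the quotient of $\mathcal D_{\mathfrak g\times V}$ by the left ideal generated by $F$ and the vector fields $\tau_{\mathfrak g\times V}(Z)$, $Z\in\mathfrak g$. Identifying $T^*(\mathfrak g\times V)$ with $\mathfrak g\times V\times\mathfrak g\times V$ via the form $(A,B)\mapsto\mathrm{trace}(AB)$ on $\mathfrak g$ and the pairing $(u,v)\mapsto\langle u,\bar v\rangle$ on $V$, the characteristic variety of $\mathcal N_{F,\mathfrak g}$ is contained in $$\{(X,u,Y,v): Y\in\mathfrak N,\ [X,Y]=u\wedge\bar v\},$$ where $\mathfrak N$ is the nilpotent cone of $\mathfrak g$ and $u\wedge\bar v$ is the $n\times n$ matrix with $(i,j)$ entry $u_i\bar v_j$.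
   Context: $G$ acts on $\mathfrak g\times V$ by $g.(X,u)=(gXg^{-1},gu)$; $\tau_{\mathfrak g\times V}(Z)$ is the vector field whose value at $(X,u)$ is $([X,Z],Zu)$. $\mathcal D_{\mathfrak g}^G$: $G$-invariant differential operators on $\mathfrak g$; (H-C)-type: principal symbols contain a power of the ideal of $G$-invariant polynomials on $\mathfrak g^*$ vanishing at $0$. *)

theory Defs
  imports "HOL-Analysis.Analysis"
begin

text \<open>A polynomial differential operator on the affine space with coordinates indexed by the
finite type 'v is written in normal-ordered form
  P = sum over monomials m of  P m * x^(m o Inl) * d^(m o Inr),
i.e. by its finitely supported coefficient function on exponents of the variables
x_v (tag Inl v) and d_v (tag Inr v).  Points of the cotangent bundle in standard
coordinates are functions p :: 'v + 'v => complex, p (Inl v) = x_v, p (Inr v) = xi_v.\<close>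

type_synonym 'v diffop = "('v + 'v \<Rightarrow> nat) \<Rightarrow> complex"

definition supp_op :: "'v diffop \<Rightarrow> ('v + 'v \<Rightarrow> nat) set" where
  "supp_op P = {m. P m \<noteq> 0}"

definition is_diffop :: "'v diffop \<Rightarrow> bool" where
  "is_diffop P \<longleftrightarrow> finite (supp_op P)"

definition poly_eval :: "(('w::finite \<Rightarrow> nat) \<Rightarrow> complex) \<Rightarrow> ('w \<Rightarrow> complex) \<Rightarrow> complex" where
  "poly_eval c p = (\<Sum>m\<in>{m. c m \<noteq> 0}. c m * (\<Prod>w\<in>UNIV. p w ^ m w))"

definition polyfun :: "(('w::finite \<Rightarrow> complex) \<Rightarrow> complex) set" where
  "polyfun = {f. \<exists>c. finite {m. c m \<noteq> 0} \<and> f = poly_eval c}"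

definition full_sym :: "('v::finite) diffop \<Rightarrow> ('v + 'v \<Rightarrow> complex) \<Rightarrow> complex" where
  "full_sym P = poly_eval P"

text \<open>Product in the Weyl algebra:
  x^a d^b * x^c d^e = sum_k prod_v (b_v choose k_v) c_v!/(c_v-k_v)! x^(a+c-k) d^(b+e-k).\<close>
definition weyl_coeff :: "('v::finite + 'v \<Rightarrow> nat) \<Rightarrow> ('v + 'v \<Rightarrow> nat) \<Rightarrow> ('v \<Rightarrow> nat) \<Rightarrow> complex" where
  "weyl_coeff m1 m2 k = (\<Prod>v\<in>UNIV. of_nat ((m1 (Inr v) choose k v) *
      (fact (m2 (Inl v)) div fact (m2 (Inl v) - k v))))"

definition weyl_res :: "('v + 'v \<Rightarrow> nat) \<Rightarrow> ('v + 'v \<Rightarrow> nat) \<Rightarrow> ('v \<Rightarrow> nat) \<Rightarrow> ('v + 'v \<Rightarrow> nat)" where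
  "weyl_res m1 m2 k = (\<lambda>w. case w of Inl v \<Rightarrow> m1 (Inl v) + m2 (Inl v) - k v
                                   | Inr v \<Rightarrow> m1 (Inr v) + m2 (Inr v) - k v)"

definition weyl_mult :: "('v::finite) diffop \<Rightarrow> 'v diffop \<Rightarrow> 'v diffop" where
  "weyl_mult P Q = (\<lambda>m. \<Sum>m1\<in>supp_op P. \<Sum>m2\<in>supp_op Q.
      \<Sum>k\<in>{k. \<forall>v. k v \<le> m1 (Inr v) \<and> k v \<le> m2 (Inl v)}.
        (if m = weyl_res m1 m2 k then P m1 * Q m2 * weyl_coeff m1 m2 k else 0))"

definition left_ideal_gen :: "('v::finite) diffop set \<Rightarrow> 'v diffop set" where
  "left_ideal_gen S = {P. \<exists>(N::nat) a s. (\<forall>i<N. is_diffop (a i) \<and> s i \<in> S) \<and>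
      P = (\<lambda>m. \<Sum>i<N. weyl_mult (a i) (s i) m)}"

definition d_deg :: "('v::finite + 'v \<Rightarrow> nat) \<Rightarrow> nat" where
  "d_deg m = (\<Sum>v\<in>UNIV. m (Inr v))"

definition op_order :: "('v::finite) diffop \<Rightarrow> nat" where
  "op_order P = Max (d_deg ` supp_op P)"

definition prin_sym :: "('v::finite) diffop \<Rightarrow> ('v + 'v \<Rightarrow> complex) \<Rightarrow> complex" where
  "prin_sym P p = (\<Sum>m\<in>supp_op P. if d_deg m = op_order P
       then P m * (\<Prod>w\<in>UNIV. p w ^ m w) else 0)"

text \<open>Characteristic variety of the cyclic module D / I (I a left ideal): the common zero set
in the cotangent bundle of the principal symbols of the elements of I
(= support of gr(D/I) = gr D / gr I for the induced good filtration).\<close>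
definition char_var :: "('v::finite) diffop set \<Rightarrow> ('v + 'v \<Rightarrow> complex) set" where
  "char_var I = {p. \<forall>P\<in>I. prin_sym P p = 0}"

definition mat_bracket :: "complex^'n^'n \<Rightarrow> complex^'n^'n \<Rightarrow> complex^'n^'n" where
  "mat_bracket A B = A ** B - B ** A"

fun mat_pow :: "complex^'n^'n \<Rightarrow> nat \<Rightarrow> complex^'n^'n" where
  "mat_pow A 0 = mat 1"
| "mat_pow A (Suc k) = A ** mat_pow A k"

definition nilpotent_mat :: "complex^'n^'n \<Rightarrow> bool" where
  "nilpotent_mat Y \<longleftrightarrow> (\<exists>k. mat_pow Y k = 0)"

text \<open>Points of T*g, identified with g x g via trace(AB): the covector tr(. Y) has
coordinate xi_(i,j) = tr(E_ij Y) = Y_ji.\<close>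
definition pt_g :: "complex^'n^'n \<Rightarrow> complex^'n^'n \<Rightarrow> ('n \<times> 'n) + ('n \<times> 'n) \<Rightarrow> complex" where
  "pt_g X Y = (\<lambda>w. case w of Inl (i, j) \<Rightarrow> X $ i $ j | Inr (i, j) \<Rightarrow> Y $ j $ i)"

text \<open>Points of T*(g x V), identified with g x V x g x V via trace(AB) on g and the pairing
(u, v) |-> <u, conj v> = sum_i u_i conj(v_i) on V.\<close>
definition cot_pt :: "complex^'n^'n \<Rightarrow> complex^'n \<Rightarrow> complex^'n^'n \<Rightarrow> complex^'n \<Rightarrow>
    (('n \<times> 'n) + 'n) + (('n \<times> 'n) + 'n) \<Rightarrow> complex" where
  "cot_pt X u Y v = (\<lambda>w. case w of
       Inl (Inl (i, j)) \<Rightarrow> X $ i $ j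
     | Inl (Inr i) \<Rightarrow> u $ i
     | Inr (Inl (i, j)) \<Rightarrow> Y $ j $ i
     | Inr (Inr i) \<Rightarrow> cnj (v $ i))"

text \<open>G-invariant differential operators on g (G = GL_n acting by conjugation): invariance
of the operator under the linear automorphisms Ad g is invariance of its normal-ordered
full symbol under the cotangent lift (X, Y) |-> (g X g^-1, g Y g^-1).\<close>
definition G_invariant :: "('n::finite \<times> 'n) diffop \<Rightarrow> bool" where
  "G_invariant P \<longleftrightarrow> (\<forall>g X Y. invertible g \<longrightarrow>
      full_sym P (pt_g (g ** X ** matrix_inv g) (g ** Y ** matrix_inv g)) = full_sym P (pt_g X Y))"

definition inv_poly_plus :: "(complex^'n^'n \<Rightarrow> complex) set" where
  "inv_poly_plus = {q. (\<exists>f\<in>(polyfun :: (('n::finite \<times> 'n \<Rightarrow> complex) \<Rightarrow> complex) set).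
        q = (\<lambda>Y. f (\<lambda>(i, j). Y $ i $ j))) \<and> q 0 = 0 \<and>
      (\<forall>g Y. invertible g \<longrightarrow> q (g ** Y ** matrix_inv g) = q Y)}"

definition poly_ideal_gen :: "(('w::finite \<Rightarrow> complex) \<Rightarrow> complex) set \<Rightarrow> (('w \<Rightarrow> complex) \<Rightarrow> complex) set" where
  "poly_ideal_gen S = {f. \<exists>(N::nat) a s. (\<forall>i<N. a i \<in> polyfun \<and> s i \<in> S) \<and>
      f = (\<lambda>p. \<Sum>i<N. a i p * s i p)}"

definition Y_of :: "(('n \<times> 'n) + ('n \<times> 'n) \<Rightarrow> complex) \<Rightarrow> complex^'n^'n" where
  "Y_of p = (\<chi> i j. p (Inr (j, i)))"

text \<open>(H-C)-type: the ideal generated by the principal symbols of F contains a power of the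
ideal of C[g x g*] generated by the G-invariant polynomials on g* vanishing at 0, i.e. all
k-fold products of such polynomials.\<close>
definition HC_type :: "('n::finite \<times> 'n) diffop set \<Rightarrow> bool" where
  "HC_type F \<longleftrightarrow> (\<exists>k::nat. \<forall>qs. (\<forall>i<k. qs i \<in> inv_poly_plus) \<longrightarrow>
      (\<lambda>p. \<Prod>i<k. qs i (Y_of p)) \<in> poly_ideal_gen (prin_sym ` F))"

definition ext_g :: "('n \<times> 'n) diffop \<Rightarrow> (('n \<times> 'n) + 'n) diffop" where
  "ext_g P = (\<lambda>m. if (\<forall>i. m (Inl (Inr i)) = 0 \<and> m (Inr (Inr i)) = 0)
      then P (\<lambda>w. case w of Inl a \<Rightarrow> m (Inl (Inl a)) | Inr a \<Rightarrow> m (Inr (Inl a))) else 0)"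

definition mono_xd :: "'v \<Rightarrow> 'v \<Rightarrow> ('v + 'v \<Rightarrow> nat)" where
  "mono_xd a c = (\<lambda>w. (if w = Inl a then 1 else 0) + (if w = Inr c then 1 else 0))"

text \<open>Coefficient of x_a d_c in tau(Z) = sum_ij [X,Z]_ij d_(X_ij) + sum_i (Z u)_i d_(u_i).\<close>
definition tau_coeff :: "complex^'n^'n \<Rightarrow> ('n \<times> 'n) + 'n \<Rightarrow> ('n \<times> 'n) + 'n \<Rightarrow> complex" where
  "tau_coeff Z a c = (case (a, c) of
      (Inl (p, q), Inl (i, j)) \<Rightarrow> (if p = i then Z $ q $ j else 0) - (if q = j then Z $ i $ p else 0)
    | (Inr k, Inr i) \<Rightarrow> Z $ i $ k
    | _ \<Rightarrow> 0)"

definition tau :: "complex^'n^'n \<Rightarrow> (('n::finite \<times> 'n) + 'n) diffop" where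
  "tau Z = (\<lambda>m. \<Sum>a\<in>UNIV. \<Sum>c\<in>UNIV. if m = mono_xd a c then tau_coeff Z a c else 0)"

end

theory Submission
  imports Defs "Jordan_Normal_Form.Jordan_Normal_Form_Existence"
begin

(*
  Let (X, u, Y, v) lie in the characteristic variety of the cyclic module
  D / I, where I is the left ideal generated by F (viewed inside D_(g x V)) and by the vector
  fields tau(Z).  Every generator lies in I, so its principal symbol vanishes at the point.

  * For P in F the principal symbol of P on T*(g x V) is that of P on T*g, evaluated at
    (X, Y).  By the (H-C)-condition some power of every G-invariant polynomial q on g* with
    q(0) = 0 lies in the ideal generated by these symbols, hence q(Y) = 0.  Applied to the
    invariants c |-> char_Y(c) - c^n this gives char_Y = t^n, so Y is nilpotent (we read this
    off from a Jordan normal form of Y, using the Jordan_Normal_Form library).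
  * tau(Z) is a vector field; its principal symbol at (X, u, Y, v) is the pairing
    trace(Z ([Y, X] + u (conj v)^T)) of Z with the moment map.  Its vanishing for all
    matrix units Z is the identity [X, Y] = u (conj v)^T.
*)

no_notation Matrix.vec_index (infixl \<open>$\<close> 100)

lemma sum_UNIV_Plus:
  "(\<Sum>x\<in>(UNIV :: ('a::finite + 'b::finite) set). g x) = (\<Sum>a\<in>UNIV. g (Inl a)) + (\<Sum>b\<in>UNIV. g (Inr b))"
  by (subst UNIV_Plus_UNIV[symmetric], subst sum.Plus) auto

lemma prod_UNIV_Plus:
  "(\<Prod>x\<in>(UNIV :: ('a::finite + 'b::finite) set). g x) = (\<Prod>a\<in>UNIV. g (Inl a)) * (\<Prod>b\<in>UNIV. g (Inr b))"
  by (subst UNIV_Plus_UNIV[symmetric], subst prod.Plus) auto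

lemma sum_UNIV_Times:
  "(\<Sum>x\<in>(UNIV :: ('a::finite \<times> 'b::finite) set). g x) = (\<Sum>a\<in>UNIV. \<Sum>b\<in>UNIV. g (a, b))"
  by (subst UNIV_Times_UNIV[symmetric], subst sum.cartesian_product) simp

lemma sum_if_const: "(\<Sum>x\<in>A. if P then f x else 0) = (if P then sum f A else 0)"
  by simp

lemma sum_delta_pair:
  "(\<Sum>a'\<in>(UNIV :: 'a::finite set). \<Sum>c'\<in>(UNIV :: 'b::finite set).
      if a' = a \<and> c' = c then g a' c' else 0) = g a c"
proof -
  have "(\<Sum>a'\<in>(UNIV :: 'a set). \<Sum>c'\<in>(UNIV :: 'b set). if a' = a \<and> c' = c then g a' c' else 0)
      = (\<Sum>a'\<in>(UNIV :: 'a set). if a' = a then (\<Sum>c'\<in>(UNIV :: 'b set). if c' = c then g a' c' else 0) else 0)"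
    by (rule sum.cong) auto
  then show ?thesis by (simp add: sum.delta')
qed


definition monom_ev :: "('w::finite \<Rightarrow> nat) \<Rightarrow> ('w \<Rightarrow> complex) \<Rightarrow> complex" where
  "monom_ev m p = (\<Prod>w\<in>UNIV. p w ^ m w)"

lemma monom_ev_add: "monom_ev (\<lambda>w. m1 w + m2 w) p = monom_ev m1 p * monom_ev m2 p"
  unfolding monom_ev_def by (simp add: power_add prod.distrib)

lemma monom_ev_delta: "monom_ev (\<lambda>w. if w = w0 then 1 else 0) p = p w0"
proof -
  have "monom_ev (\<lambda>w. if w = w0 then 1 else 0) p = (\<Prod>w\<in>UNIV. if w = w0 then p w else 1)"
    unfolding monom_ev_def by (rule prod.cong) auto
  then show ?thesis by (simp add: prod.delta')
qed

text \<open>Any finite linear combination of monomials (possibly with repeated exponents) is a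
  polynomial function; the closure properties below all reduce to this.\<close>
lemma polyfun_sumI:
  assumes "finite I"
  shows "(\<lambda>p. \<Sum>i\<in>I. a i * monom_ev (e i) p) \<in> polyfun"
proof -
  define c where "c m = (\<Sum>i\<in>{i\<in>I. e i = m}. a i)" for m
  have supp: "{m. c m \<noteq> 0} \<subseteq> e ` I"
    unfolding c_def by (force intro: sum.neutral)
  have fin: "finite (e ` I)" using assms by simp
  have "poly_eval c p = (\<Sum>i\<in>I. a i * monom_ev (e i) p)" for p
  proof -
    have "poly_eval c p = (\<Sum>m\<in>e ` I. c m * monom_ev m p)"
      unfolding poly_eval_def monom_ev_def
      by (rule sum.mono_neutral_left) (use fin supp in auto)
    also have "\<dots> = (\<Sum>m\<in>e ` I. \<Sum>i\<in>{i\<in>I. e i = m}. a i * monom_ev (e i) p)"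
      unfolding c_def sum_distrib_right by (rule sum.cong) auto
    also have "\<dots> = (\<Sum>i\<in>I. a i * monom_ev (e i) p)"
      using sum.image_gen[OF assms, of "\<lambda>i. a i * monom_ev (e i) p" e] by simp
    finally show ?thesis .
  qed
  moreover have "finite {m. c m \<noteq> 0}" using supp fin finite_subset by blast
  ultimately show ?thesis unfolding polyfun_def by (intro CollectI exI[of _ c]) auto
qed

lemma polyfunE:
  assumes "f \<in> polyfun"
  obtains S c where "finite S" "\<And>p. f p = (\<Sum>m\<in>S. c m * monom_ev m p)"
  using assms unfolding polyfun_def poly_eval_def monom_ev_def by blast

lemma polyfun_const: "(\<lambda>p. k) \<in> polyfun"
  using polyfun_sumI[of "{()}" "\<lambda>_. k" "\<lambda>_ _. 0"] by (simp add: monom_ev_def)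

lemma polyfun_var: "(\<lambda>p. p w0) \<in> polyfun"
  using polyfun_sumI[of "{()}" "\<lambda>_. 1" "\<lambda>_ w. if w = w0 then 1 else 0"]
  by (simp add: monom_ev_delta)

lemma polyfun_add:
  assumes "f \<in> polyfun" "g \<in> polyfun"
  shows "(\<lambda>p. f p + g p) \<in> polyfun"
proof -
  obtain S c where S: "finite S" "\<And>p. f p = (\<Sum>m\<in>S. c m * monom_ev m p)"
    using polyfunE[OF assms(1)] by blast
  obtain T d where T: "finite T" "\<And>p. g p = (\<Sum>m\<in>T. d m * monom_ev m p)"
    using polyfunE[OF assms(2)] by blast
  have "f p + g p = (\<Sum>x\<in>S <+> T. case_sum c d x * monom_ev (case_sum id id x) p)" for p
    using S T by (simp add: sum.Plus)
  then have "(\<lambda>p. f p + g p) = (\<lambda>p. \<Sum>x\<in>S <+> T. case_sum c d x * monom_ev (case_sum id id x) p)"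
    by blast
  also have "\<dots> \<in> polyfun" by (rule polyfun_sumI) (use S T in simp)
  finally show ?thesis .
qed

lemma polyfun_mult:
  assumes "f \<in> polyfun" "g \<in> polyfun"
  shows "(\<lambda>p. f p * g p) \<in> polyfun"
proof -
  obtain S c where S: "finite S" "\<And>p. f p = (\<Sum>m\<in>S. c m * monom_ev m p)"
    using polyfunE[OF assms(1)] by blast
  obtain T d where T: "finite T" "\<And>p. g p = (\<Sum>m\<in>T. d m * monom_ev m p)"
    using polyfunE[OF assms(2)] by blast
  have "f p * g p = (\<Sum>x\<in>S \<times> T. (c (fst x) * d (snd x)) * monom_ev (\<lambda>w. fst x w + snd x w) p)" for p
    unfolding S(2) T(2) sum_product sum.cartesian_product monom_ev_add
    by (rule sum.cong) (auto simp: algebra_simps)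
  then have "(\<lambda>p. f p * g p) =
      (\<lambda>p. \<Sum>x\<in>S \<times> T. (c (fst x) * d (snd x)) * monom_ev (\<lambda>w. fst x w + snd x w) p)"
    by blast
  also have "\<dots> \<in> polyfun" by (rule polyfun_sumI) (use S T in auto)
  finally show ?thesis .
qed

lemma polyfun_diff:
  assumes "f \<in> polyfun" "g \<in> polyfun"
  shows "(\<lambda>p. f p - g p) \<in> polyfun"
  using polyfun_add[OF assms(1) polyfun_mult[OF polyfun_const[of "-1"] assms(2)]] by simp

lemma polyfun_sum:
  assumes "finite A" "\<And>x. x \<in> A \<Longrightarrow> f x \<in> polyfun"
  shows "(\<lambda>p. \<Sum>x\<in>A. f x p) \<in> polyfun"
  using assms
proof (induction A rule: finite_induct)
  case empty then show ?case using polyfun_const[of 0] by simp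
next
  case (insert x A)
  then show ?case using polyfun_add[of "f x" "\<lambda>p. \<Sum>x\<in>A. f x p"] by simp
qed

lemma polyfun_prod:
  assumes "finite A" "\<And>x. x \<in> A \<Longrightarrow> f x \<in> polyfun"
  shows "(\<lambda>p. \<Prod>x\<in>A. f x p) \<in> polyfun"
  using assms
proof (induction A rule: finite_induct)
  case empty then show ?case using polyfun_const[of 1] by simp
next
  case (insert x A)
  then show ?case using polyfun_mult[of "f x" "\<lambda>p. \<Prod>x\<in>A. f x p"] by simp
qed

lemma poly_ideal_gen_vanish:
  assumes "f \<in> poly_ideal_gen S" "\<And>s. s \<in> S \<Longrightarrow> s p = 0"
  shows "f p = 0"
  using assms unfolding poly_ideal_gen_def by (auto intro!: sum.neutral)


definition enum_idx :: "nat \<Rightarrow> 'n::finite" where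
  "enum_idx = (SOME h. bij_betw h {0..<CARD('n)} UNIV)"

lemma enum_idx_bij: "bij_betw (enum_idx :: nat \<Rightarrow> 'n::finite) {0..<CARD('n)} UNIV"
proof -
  have "\<exists>h::nat \<Rightarrow> 'n. bij_betw h {0..<CARD('n)} UNIV"
    using ex_bij_betw_nat_finite[of "UNIV :: 'n set"] by simp
  then show ?thesis unfolding enum_idx_def by (rule someI_ex)
qed

lemma enum_idx_eq_iff:
  "i < CARD('n::finite) \<Longrightarrow> j < CARD('n) \<Longrightarrow> (enum_idx i :: 'n) = enum_idx j \<longleftrightarrow> i = j"
  using enum_idx_bij[where 'n='n] unfolding bij_betw_def inj_on_def by auto

lemma enum_idx_surj: "\<exists>i < CARD('n::finite). (enum_idx i :: 'n) = a"
proof -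
  have "a \<in> enum_idx ` {0..<CARD('n)}" using enum_idx_bij[where 'n='n] unfolding bij_betw_def by auto
  then show ?thesis by auto
qed

definition toM :: "complex^'n^'n \<Rightarrow> complex Matrix.mat" where
  "toM Y = Matrix.mat CARD('n::finite) CARD('n) (\<lambda>(i, j). Y $ enum_idx i $ enum_idx j)"

lemma toM_carrier [simp]: "toM (Y :: complex^'n^'n) \<in> carrier_mat CARD('n::finite) CARD('n)"
  and toM_dim [simp]: "dim_row (toM (Y :: complex^'n^'n)) = CARD('n)"
    "dim_col (toM (Y :: complex^'n^'n)) = CARD('n)"
  unfolding toM_def by auto

lemma toM_index [simp]:
  "i < CARD('n::finite) \<Longrightarrow> j < CARD('n) \<Longrightarrow>
     toM (Y :: complex^'n^'n) $$ (i, j) = Y $ enum_idx i $ enum_idx j"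
  unfolding toM_def by auto

lemma toM_mult: "toM ((A :: complex^'n::finite^'n) ** B) = toM A * toM B"
proof (rule eq_matI)
  fix i j assume "i < dim_row (toM A * toM B)" "j < dim_col (toM A * toM B)"
  then have i: "i < CARD('n)" and j: "j < CARD('n)" by auto
  have "(toM A * toM B) $$ (i, j) =
      (\<Sum>l\<in>{0..<CARD('n)}. A $ enum_idx i $ enum_idx l * B $ enum_idx l $ enum_idx j)"
    using i j by (simp add: scalar_prod_def)
  also have "\<dots> = (\<Sum>k\<in>UNIV. A $ enum_idx i $ k * B $ k $ enum_idx j)"
    by (rule sum.reindex_bij_betw[OF enum_idx_bij])
  also have "\<dots> = toM (A ** B) $$ (i, j)"
    using i j by (simp add: matrix_matrix_mult_def)
  finally show "toM (A ** B) $$ (i, j) = (toM A * toM B) $$ (i, j)" by simp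
qed auto

lemma toM_one: "toM (Finite_Cartesian_Product.mat 1 :: complex^'n::finite^'n) = 1\<^sub>m CARD('n)"
  by (rule eq_matI) (auto simp: Finite_Cartesian_Product.mat_def enum_idx_eq_iff)

lemma toM_eq_zero_iff: "toM (Y :: complex^'n::finite^'n) = 0\<^sub>m CARD('n) CARD('n) \<longleftrightarrow> Y = 0"
proof
  assume zero: "toM Y = 0\<^sub>m CARD('n) CARD('n)"
  have "Y $ a $ b = 0" for a b
  proof -
    obtain i j where "i < CARD('n)" "enum_idx i = a" "j < CARD('n)" "enum_idx j = b"
      using enum_idx_surj by metis
    then show ?thesis using arg_cong[OF zero, of "\<lambda>M. M $$ (i, j)"] by simp
  qed
  then show "Y = 0" by (simp add: Finite_Cartesian_Product.vec_eq_iff)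
qed (auto intro: eq_matI)

lemma mat_pow_Suc_right: "mat_pow Y (Suc k) = mat_pow Y k ** Y"
  by (induction k) (simp_all add: matrix_mul_assoc)

lemma toM_mat_pow: "toM (mat_pow (Y :: complex^'n::finite^'n) k) = toM Y ^\<^sub>m k"
  by (induction k) (simp_all add: mat_pow_Suc_right toM_mult toM_one del: mat_pow.simps(2))

lemma toM_conj_similar:
  assumes "invertible (g :: complex^'n::finite^'n)"
  shows "similar_mat (toM (g ** Y ** matrix_inv g)) (toM Y)"
proof -
  have "g ** matrix_inv g = Finite_Cartesian_Product.mat 1 \<and> matrix_inv g ** g = Finite_Cartesian_Product.mat 1"
    using assms unfolding invertible_def matrix_inv_def by (rule someI_ex)
  then show ?thesis
    by (intro similar_matI[of _ _ "toM g" "toM (matrix_inv g)" "CARD('n)"])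
      (auto simp: toM_mult[symmetric] toM_one)
qed


section \<open>Nilpotency from the characteristic polynomial\<close>

text \<open>A Jordan matrix all of whose eigenvalues are 0 vanishes in the power given by its size:
  each block of size m is a shift of order m, and m is at most the total size.\<close>
lemma jordan_matrix_zero_eigenvalues_pow:
  fixes n_as :: "(nat \<times> 'a::field) list"
  assumes zero: "\<And>m a. (m, a) \<in> set n_as \<Longrightarrow> a = 0"
    and K: "K = sum_list (map fst n_as)"
  shows "jordan_matrix n_as ^\<^sub>m K = 0\<^sub>m K K"
proof -
  have block: "jordan_block m a ^\<^sub>m K = 0\<^sub>m m m" if ma: "(m, a) \<in> set n_as" for m a
  proof -
    have "m \<in> set (map fst n_as)" using ma by force
    then have "m \<le> K" unfolding K by (rule member_le_sum_list) auto
    then show ?thesis unfolding zero[OF ma] jordan_block_zero_pow by (intro eq_matI) auto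
  qed
  have "elements_mat (jordan_matrix n_as ^\<^sub>m K) \<subseteq>
      {0} \<union> \<Union> (set (map elements_mat (map (\<lambda>(m, a). jordan_block m a ^\<^sub>m K) n_as)))"
    unfolding jordan_matrix_pow by (rule elements_diag_block_mat)
  also have "\<dots> \<subseteq> {0}"
    using block by (fastforce dest!: elements_matD)
  finally have elements: "elements_mat (jordan_matrix n_as ^\<^sub>m K) \<subseteq> {0}" .
  have carrier: "jordan_matrix n_as ^\<^sub>m K \<in> carrier_mat K K"
    unfolding K by (rule pow_carrier_mat) simp
  show ?thesis
  proof (rule eq_matI)
    fix i j assume "i < dim_row (0\<^sub>m K K)" "j < dim_col (0\<^sub>m K K)"
    then have "i < K" "j < K" by auto
    then have "(jordan_matrix n_as ^\<^sub>m K) $$ (i, j) \<in> elements_mat (jordan_matrix n_as ^\<^sub>m K)"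
      by (intro elements_matI[OF carrier]) auto
    then show "(jordan_matrix n_as ^\<^sub>m K) $$ (i, j) = 0\<^sub>m K K $$ (i, j)"
      using elements \<open>i < K\<close> \<open>j < K\<close> by auto
  qed (simp_all only: carrier_matD[OF carrier] index_zero_mat)
qed

lemma poly_prod_linear_powers:
  fixes a :: "'a::comm_ring_1"
  shows "poly (\<Prod>(m, b)\<leftarrow>xs. [:- b, 1:] ^ m) a = (\<Prod>(m, b)\<leftarrow>xs. (a - b) ^ m)"
  by (induction xs) (auto simp: poly_power)

text \<open>If the characteristic polynomial of an n x n matrix is t^n, then A^n = 0.  (Proved via the
  Jordan normal form, which exists because t^n splits into linear factors.)\<close>
lemma char_poly_monomial_imp_pow_zero:
  fixes A :: "'a::conjugatable_ordered_field mat"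
  assumes A: "A \<in> carrier_mat n n" and chi: "char_poly A = [:0, 1:] ^ n"
  shows "A ^\<^sub>m n = 0\<^sub>m n n"
proof -
  have "char_poly A = (\<Prod>a\<leftarrow>replicate n 0. [:- a, 1:])"
    using chi by (simp add: prod_list_replicate)
  from jordan_nf_exists[OF A this] obtain n_as where jnf: "jordan_nf A n_as" by blast
  from jordan_nf_powE[OF A jnf] obtain P Q where PQ: "P \<in> carrier_mat n n" "Q \<in> carrier_mat n n"
    "char_poly A = (\<Prod>(m, a)\<leftarrow>n_as. [:- a, 1:] ^ m)"
    "\<And>k. A ^\<^sub>m k = P * jordan_matrix n_as ^\<^sub>m k * Q" by blast
  have zero: "a = 0" if ma: "(m, a) \<in> set n_as" for m a
  proof -
    have "m \<noteq> 0" using jnf ma unfolding jordan_nf_def by force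
    then have "poly (char_poly A) a = 0"
      unfolding PQ(3) poly_prod_linear_powers prod_list_zero_iff using ma by force
    then show ?thesis using chi by (simp add: poly_power)
  qed
  have size: "sum_list (map fst n_as) = n"
  proof -
    from jnf have "similar_mat A (jordan_matrix n_as)" unfolding jordan_nf_def by simp
    from similar_matD[OF this] obtain n' where
      "A \<in> carrier_mat n' n'" "jordan_matrix n_as \<in> carrier_mat n' n'" by blast
    with A show ?thesis by (auto dest!: carrier_matD(1))
  qed
  have "A ^\<^sub>m n = P * 0\<^sub>m n n * Q"
    using PQ(4) jordan_matrix_zero_eigenvalues_pow[OF zero size[symmetric]] by simp
  also have "\<dots> = 0\<^sub>m n n" using PQ(1,2) by simp
  finally show ?thesis .
qed


section \<open>Invariant polynomials and the nilpotent cone\<close>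

text \<open>For each c, the value at c of the characteristic polynomial of Y minus its leading term.
  As a function of Y this is a conjugation-invariant polynomial vanishing at 0.\<close>
definition char_shift :: "complex \<Rightarrow> complex^'n^'n \<Rightarrow> complex" where
  "char_shift c Y = poly (char_poly (toM Y)) c - c ^ CARD('n::finite)"

lemma char_shift_zero: "char_shift c (0 :: complex^'n::finite^'n) = 0"
proof -
  have "- char_matrix (toM (0 :: complex^'n^'n)) c = c \<cdot>\<^sub>m 1\<^sub>m CARD('n)"
    by (rule eq_matI) (auto simp: char_matrix_def)
  then show ?thesis
    using char_poly_matrix[OF toM_carrier[where Y = "0 :: complex^'n^'n"], of c]
    unfolding char_shift_def by simp
qed

lemma char_shift_conj_invariant:
  "invertible (g :: complex^'n::finite^'n) \<Longrightarrow> char_shift c (g ** Y ** matrix_inv g) = char_shift c Y"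
  unfolding char_shift_def using char_poly_similar toM_conj_similar by metis

text \<open>Polynomiality in the entries of Y, via the Leibniz expansion of det(c I - Y).\<close>
lemma char_shift_polynomial:
  "\<exists>f\<in>(polyfun :: (('n::finite \<times> 'n \<Rightarrow> complex) \<Rightarrow> complex) set).
     char_shift c = (\<lambda>Y :: complex^'n^'n. f (\<lambda>(i, j). Y $ i $ j))"
proof -
  let ?N = "CARD('n)"
  let ?P = "{p. p permutes {0..<?N}}"
  let ?entry = "\<lambda>p i (e :: 'n \<times> 'n \<Rightarrow> complex). (if i = p i then c else 0) - e (enum_idx i, enum_idx (p i))"
  define f :: "('n \<times> 'n \<Rightarrow> complex) \<Rightarrow> complex" where
    "f e = (\<Sum>p\<in>?P. signof p * (\<Prod>i=0..<?N. ?entry p i e)) - c ^ ?N" for e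
  have "f \<in> polyfun"
  proof -
    have "(\<lambda>e. \<Prod>i=0..<?N. ?entry p i e) \<in> polyfun" for p
      by (intro polyfun_prod polyfun_diff polyfun_const polyfun_var) simp
    then have "(\<lambda>e. \<Sum>p\<in>?P. signof p * (\<Prod>i=0..<?N. ?entry p i e)) \<in> polyfun"
      by (intro polyfun_sum polyfun_mult[OF polyfun_const]) (auto simp: finite_permutations)
    then show ?thesis unfolding f_def by (rule polyfun_diff[OF _ polyfun_const])
  qed
  moreover have "char_shift c Y = f (\<lambda>(i, j). Y $ i $ j)" for Y :: "complex^'n^'n"
  proof -
    have carrier: "- char_matrix (toM Y) c \<in> carrier_mat ?N ?N" by (simp add: char_matrix_def)
    have "char_shift c Y = det (- char_matrix (toM Y) c) - c ^ ?N"
      unfolding char_shift_def char_poly_matrix[OF toM_carrier] ..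
    also have "det (- char_matrix (toM Y) c) =
        (\<Sum>p\<in>?P. signof p * (\<Prod>i=0..<?N. (- char_matrix (toM Y) c) $$ (i, p i)))"
      by (rule det_def'[OF carrier])
    also have "\<dots> = (\<Sum>p\<in>?P. signof p * (\<Prod>i=0..<?N. ?entry p i (\<lambda>(i, j). Y $ i $ j)))"
    proof (intro sum.cong refl arg_cong[where f = "(*) _"] prod.cong)
      fix p i assume p: "p \<in> ?P" and i: "i \<in> {0..<?N}"
      have "p i < ?N" using permutes_in_image[OF CollectD[OF p]] i by auto
      then show "(- char_matrix (toM Y) c) $$ (i, p i) = ?entry p i (\<lambda>(i, j). Y $ i $ j)"
        using i by (auto simp: char_matrix_def)
    qed
    finally show ?thesis unfolding f_def by simp
  qed
  ultimately show ?thesis by blast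
qed

lemma char_shift_in_inv_poly_plus:
  "char_shift c \<in> (inv_poly_plus :: (complex^'n::finite^'n \<Rightarrow> complex) set)"
  unfolding inv_poly_plus_def
  using char_shift_polynomial[of c] char_shift_zero[of c] char_shift_conj_invariant[of _ c] by blast

lemma nilpotent_if_invariants_vanish:
  assumes "\<forall>q\<in>(inv_poly_plus :: (complex^'n::finite^'n \<Rightarrow> complex) set). q Y = 0"
  shows "nilpotent_mat Y"
proof -
  have "poly (char_poly (toM Y)) c = c ^ CARD('n)" for c
    using assms char_shift_in_inv_poly_plus[of c] unfolding char_shift_def by auto
  then have "poly (char_poly (toM Y)) = poly ([:0, 1:] ^ CARD('n))"
    by (auto simp: poly_power)
  then have "char_poly (toM Y) = [:0, 1:] ^ CARD('n)"
    by (simp add: poly_eq_poly_eq_iff)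
  then have "toM (mat_pow Y CARD('n)) = 0\<^sub>m CARD('n) CARD('n)"
    unfolding toM_mat_pow by (rule char_poly_monomial_imp_pow_zero[OF toM_carrier])
  then show ?thesis unfolding toM_eq_zero_iff nilpotent_mat_def by blast
qed

text \<open>Consequence of the (H-C)-condition: at a point (X, Y) of T*g where all principal symbols of F
  vanish, every invariant q with q(0) = 0 satisfies q(Y)^k = 0, so Y is nilpotent.\<close>
lemma HC_type_imp_nilpotent:
  fixes F :: "('n::finite \<times> 'n) diffop set"
  assumes "HC_type F" and vanish: "\<forall>P\<in>F. prin_sym P (pt_g X Y) = 0"
  shows "nilpotent_mat Y"
proof (rule nilpotent_if_invariants_vanish, rule ballI)
  fix q :: "complex^'n^'n \<Rightarrow> complex" assume q: "q \<in> inv_poly_plus"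
  from assms(1) obtain k where HC: "\<forall>qs :: nat \<Rightarrow> complex^'n^'n \<Rightarrow> complex.
      (\<forall>i<k. qs i \<in> inv_poly_plus) \<longrightarrow> (\<lambda>p. \<Prod>i<k. qs i (Y_of p)) \<in> poly_ideal_gen (prin_sym ` F)"
    unfolding HC_type_def by blast
  have "(\<lambda>p. \<Prod>i<k. q (Y_of p)) \<in> poly_ideal_gen (prin_sym ` F)"
    using HC[rule_format, of "\<lambda>_. q"] q by simp
  then have "(\<Prod>i<k. q (Y_of (pt_g X Y))) = 0"
    by (rule poly_ideal_gen_vanish) (use vanish in auto)
  moreover have "Y_of (pt_g X Y) = Y"
    by (simp add: Y_of_def pt_g_def Finite_Cartesian_Product.vec_eq_iff)
  ultimately show "q Y = 0" by simp
qed


definition weyl_one :: "('v::finite) diffop" where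
  "weyl_one = (\<lambda>m. if m = (\<lambda>_. 0) then 1 else 0)"

lemma supp_weyl_one: "supp_op weyl_one = {\<lambda>_. 0}"
  unfolding supp_op_def weyl_one_def by auto

lemma weyl_mult_one_left:
  assumes "is_diffop (Q :: ('v::finite) diffop)"
  shows "weyl_mult weyl_one Q = Q"
proof
  fix m
  have res: "weyl_res (\<lambda>_. 0) m2 (\<lambda>_. 0) = m2" for m2 :: "'v + 'v \<Rightarrow> nat"
    unfolding weyl_res_def by (rule ext) (auto split: sum.splits)
  have "weyl_mult weyl_one Q m = (\<Sum>m2\<in>supp_op Q. \<Sum>k\<in>{k. \<forall>v. k v \<le> 0 \<and> k v \<le> m2 (Inl v)}.
      if m = weyl_res (\<lambda>_. 0) m2 k then (weyl_one :: 'v diffop) (\<lambda>_. 0) * Q m2 * weyl_coeff (\<lambda>_. 0) m2 k else 0)"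
    unfolding weyl_mult_def supp_weyl_one by simp
  also have "\<dots> = (\<Sum>m2\<in>supp_op Q. if m = m2 then Q m2 else 0)"
  proof (rule sum.cong[OF refl])
    fix m2 :: "'v + 'v \<Rightarrow> nat"
    text \<open>Multiplying by the unit on the left involves no contractions.\<close>
    have "{k. \<forall>v. k v \<le> 0 \<and> k v \<le> m2 (Inl v)} = {\<lambda>_. 0}" by auto
    then show "(\<Sum>k\<in>{k. \<forall>v. k v \<le> 0 \<and> k v \<le> m2 (Inl v)}.
        if m = weyl_res (\<lambda>_. 0) m2 k then (weyl_one :: 'v diffop) (\<lambda>_. 0) * Q m2 * weyl_coeff (\<lambda>_. 0) m2 k else 0) =
        (if m = m2 then Q m2 else 0)"
      by (simp add: res weyl_coeff_def weyl_one_def)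
  qed
  also have "\<dots> = Q m"
    using assms unfolding is_diffop_def by (simp add: sum.delta supp_op_def)
  finally show "weyl_mult weyl_one Q m = Q m" .
qed

text \<open>Each generator lies in the left ideal it generates (as 1 * s).\<close>
lemma generator_in_left_ideal:
  assumes "s \<in> S" "is_diffop s"
  shows "s \<in> left_ideal_gen S"
proof -
  have "s = (\<lambda>m. \<Sum>i<(1::nat). weyl_mult ((\<lambda>_. weyl_one) i) ((\<lambda>_. s) i) m)"
    using weyl_mult_one_left[OF assms(2)] by simp
  moreover have "is_diffop (weyl_one :: ('a::finite) diffop)"
    unfolding is_diffop_def supp_weyl_one by simp
  ultimately show ?thesis unfolding left_ideal_gen_def using assms(1)
    by (intro CollectI exI[of _ "1::nat"] exI[of _ "\<lambda>_. weyl_one"] exI[of _ "\<lambda>_. s"]) auto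
qed

lemma char_var_generator:
  assumes "p \<in> char_var (left_ideal_gen S)" "s \<in> S" "is_diffop s"
  shows "prin_sym s p = 0"
  using assms generator_in_left_ideal unfolding char_var_def by blast

lemma prin_sym_homogeneous:
  assumes "\<And>m. m \<in> supp_op P \<Longrightarrow> d_deg m = d"
  shows "prin_sym P p = (\<Sum>m\<in>supp_op P. P m * monom_ev m p)"
  unfolding prin_sym_def monom_ev_def
proof (rule sum.cong[OF refl])
  fix m assume m: "m \<in> supp_op P"
  then have "d_deg ` supp_op P = {d}" using assms by auto
  then have "op_order P = d" unfolding op_order_def by simp
  then show "(if d_deg m = op_order P then P m * (\<Prod>w\<in>UNIV. p w ^ m w) else 0) =
      P m * (\<Prod>w\<in>UNIV. p w ^ m w)"
    using assms[OF m] by simp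
qed


definition lift_exp :: "(('n \<times> 'n) + ('n \<times> 'n) \<Rightarrow> nat) \<Rightarrow> (('n \<times> 'n) + 'n) + (('n \<times> 'n) + 'n) \<Rightarrow> nat" where
  "lift_exp m = (\<lambda>w. case w of Inl (Inl a) \<Rightarrow> m (Inl a) | Inr (Inl a) \<Rightarrow> m (Inr a) | _ \<Rightarrow> 0)"

text \<open>Hence ext_g only relabels the monomials of P, preserving orders and symbols.\<close>
lemma inj_lift_exp: "inj lift_exp"
proof (rule injI)
  fix m1 m2 :: "('n \<times> 'n) + ('n \<times> 'n) \<Rightarrow> nat"
  assume eq: "lift_exp m1 = lift_exp m2"
  show "m1 = m2"
  proof
    fix w show "m1 w = m2 w"
      using fun_cong[OF eq, of "case_sum (Inl \<circ> Inl) (Inr \<circ> Inl) w"]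
      by (cases w) (simp_all add: lift_exp_def)
  qed
qed

lemma ext_g_lift_exp: "ext_g P (lift_exp m) = P m"
proof -
  have "(\<lambda>w. case w of Inl a \<Rightarrow> lift_exp m (Inl (Inl a)) | Inr a \<Rightarrow> lift_exp m (Inr (Inl a))) = m"
    by (rule ext) (auto simp: lift_exp_def split: sum.splits)
  moreover have "case_sum (\<lambda>a. m (Inl a)) (\<lambda>a. m (Inr a)) = m"
    by (rule ext) (simp split: sum.split)
  ultimately show ?thesis unfolding ext_g_def by (simp add: lift_exp_def)
qed

lemma supp_ext_g: "supp_op (ext_g P) = lift_exp ` supp_op P"
proof
  show "supp_op (ext_g P) \<subseteq> lift_exp ` supp_op P"
  proof
    fix m' assume m': "m' \<in> supp_op (ext_g P)"
    then have V_free: "\<forall>i. m' (Inl (Inr i)) = 0 \<and> m' (Inr (Inr i)) = 0"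
      unfolding supp_op_def ext_g_def by (auto split: if_splits)
    define m where "m = (\<lambda>w. case w of Inl a \<Rightarrow> m' (Inl (Inl a)) | Inr a \<Rightarrow> m' (Inr (Inl a)))"
    have "m' = lift_exp m"
      by (rule ext) (use V_free in \<open>auto simp: lift_exp_def m_def split: sum.splits\<close>)
    then show "m' \<in> lift_exp ` supp_op P" using m' by (auto simp: supp_op_def ext_g_lift_exp)
  qed
qed (auto simp: supp_op_def ext_g_lift_exp)

lemma is_diffop_ext_g: "is_diffop P \<Longrightarrow> is_diffop (ext_g P)"
  unfolding is_diffop_def supp_ext_g by simp

lemma d_deg_lift_exp: "d_deg (lift_exp m) = d_deg m"
  unfolding d_deg_def by (simp add: sum_UNIV_Plus lift_exp_def)

lemma monom_ev_lift_exp: "monom_ev (lift_exp m) (cot_pt X u Y v) = monom_ev m (pt_g X Y)"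
proof -
  have "cot_pt X u Y v (Inl (Inl a)) = pt_g X Y (Inl a)"
    and "cot_pt X u Y v (Inr (Inl a)) = pt_g X Y (Inr a)" for a
    by (cases a; simp add: cot_pt_def pt_g_def)+
  then show ?thesis unfolding monom_ev_def by (simp add: prod_UNIV_Plus lift_exp_def)
qed

lemma prin_sym_ext_g: "prin_sym (ext_g P) (cot_pt X u Y v) = prin_sym P (pt_g X Y)"
proof -
  have order: "op_order (ext_g P) = op_order P"
    unfolding op_order_def supp_ext_g image_image d_deg_lift_exp ..
  have "prin_sym (ext_g P) (cot_pt X u Y v) = (\<Sum>m\<in>supp_op P.
      if d_deg (lift_exp m) = op_order P then ext_g P (lift_exp m) * monom_ev (lift_exp m) (cot_pt X u Y v) else 0)"
    unfolding prin_sym_def supp_ext_g order monom_ev_def[symmetric]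
    by (simp add: sum.reindex[OF inj_on_subset[OF inj_lift_exp subset_UNIV]])
  also have "\<dots> = prin_sym P (pt_g X Y)"
    unfolding prin_sym_def d_deg_lift_exp ext_g_lift_exp monom_ev_lift_exp unfolding monom_ev_def ..
  finally show ?thesis .
qed


section \<open>The vector fields tau(Z)\<close>

lemma mono_xd_eq_iff: "mono_xd a c = mono_xd a' c' \<longleftrightarrow> a' = a \<and> c' = c"
proof
  assume eq: "mono_xd a c = mono_xd a' c'"
  from fun_cong[OF eq, of "Inl a"] have "a' = a" by (auto simp: mono_xd_def split: if_splits)
  moreover from fun_cong[OF eq, of "Inr c"] have "c' = c" by (auto simp: mono_xd_def split: if_splits)
  ultimately show "a' = a \<and> c' = c" ..
qed auto

lemma inj_mono_xd: "inj (\<lambda>(a, c). mono_xd a c)"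
  by (rule injI) (auto simp: mono_xd_eq_iff)

lemma tau_mono_xd: "tau Z (mono_xd a c) = tau_coeff Z a c"
  unfolding tau_def mono_xd_eq_iff by (rule sum_delta_pair)

lemma supp_tau: "supp_op (tau Z) \<subseteq> range (\<lambda>(a, c). mono_xd a c)"
  unfolding supp_op_def tau_def by (force intro: sum.neutral)

lemma is_diffop_tau: "is_diffop (tau (Z :: complex^'n::finite^'n))"
  unfolding is_diffop_def by (rule finite_subset[OF supp_tau]) simp

lemma d_deg_mono_xd: "d_deg (mono_xd (a :: 'v::finite) c) = 1"
  unfolding d_deg_def mono_xd_def by (simp add: sum.delta')

lemma monom_ev_mono_xd: "monom_ev (mono_xd a c) p = p (Inl a) * p (Inr c)"
  using monom_ev_add[of "\<lambda>w. if w = Inl a then 1 else 0" "\<lambda>w. if w = Inr c then 1 else 0"]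
  unfolding mono_xd_def monom_ev_delta .

text \<open>tau(Z) is a vector field, so its principal symbol is its full symbol, bilinear in the
  position and momentum coordinates.\<close>
lemma prin_sym_tau:
  "prin_sym (tau (Z :: complex^'n::finite^'n)) p =
     (\<Sum>a\<in>UNIV. \<Sum>c\<in>UNIV. tau_coeff Z a c * (p (Inl a) * p (Inr c)))"
proof -
  have "prin_sym (tau Z) p = (\<Sum>m\<in>supp_op (tau Z). tau Z m * monom_ev m p)"
  proof (rule prin_sym_homogeneous)
    fix m assume "m \<in> supp_op (tau Z)"
    then obtain a c where "m = mono_xd a c" using supp_tau by fast
    then show "d_deg m = 1" by (simp add: d_deg_mono_xd)
  qed
  also have "\<dots> = (\<Sum>m\<in>range (\<lambda>(a, c). mono_xd a c). tau Z m * monom_ev m p)"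
    by (rule sum.mono_neutral_left) (use supp_tau in \<open>auto simp: supp_op_def\<close>)
  also have "\<dots> = (\<Sum>x\<in>UNIV. tau Z (case x of (a, c) \<Rightarrow> mono_xd a c) *
      monom_ev (case x of (a, c) \<Rightarrow> mono_xd a c) p)"
    by (subst sum.reindex[OF inj_mono_xd]) (simp add: comp_def)
  also have "\<dots> = (\<Sum>a\<in>UNIV. \<Sum>c\<in>UNIV. tau_coeff Z a c * (p (Inl a) * p (Inr c)))"
    by (simp add: sum_UNIV_Times tau_mono_xd monom_ev_mono_xd)
  finally show ?thesis .
qed

text \<open>At (X, u, Y, v) the symbol of tau(Z) is the pairing trace(Z M) of Z with the moment map
  M = [Y, X] + u (conj v)^T.\<close>
lemma prin_sym_tau_moment:
  fixes X Y Z :: "complex^'n::finite^'n" and u v :: "complex^'n"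
  shows "prin_sym (tau Z) (cot_pt X u Y v) =
     (\<Sum>i\<in>UNIV. \<Sum>j\<in>UNIV. Z $ i $ j * ((Y ** X - X ** Y) $ j $ i + u $ j * cnj (v $ i)))"
proof -
  text \<open>Expanding the symbol in coordinates leaves three sums which, after reordering the
    summation indices, are the entries of Y X, of X Y and of u (conj v)^T paired with Z.\<close>
  have YX: "(\<Sum>a\<in>UNIV. \<Sum>b\<in>UNIV. \<Sum>c\<in>UNIV. Z $ b $ c * (X $ a $ b * Y $ c $ a)) =
      (\<Sum>i\<in>UNIV. \<Sum>j\<in>UNIV. \<Sum>k\<in>UNIV. Z $ i $ j * (Y $ j $ k * X $ k $ i))"
    by (subst sum.swap, rule sum.cong[OF refl], subst sum.swap) (simp add: sum_distrib_left mult_ac)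
  have "(\<Sum>a\<in>UNIV. \<Sum>b\<in>UNIV. \<Sum>c\<in>UNIV. Z $ c $ a * (X $ a $ b * Y $ b $ c)) =
      (\<Sum>a\<in>UNIV. \<Sum>c\<in>UNIV. \<Sum>b\<in>UNIV. Z $ c $ a * (X $ a $ b * Y $ b $ c))"
    by (rule sum.cong[OF refl], rule sum.swap)
  then have XY: "(\<Sum>a\<in>UNIV. \<Sum>b\<in>UNIV. \<Sum>c\<in>UNIV. Z $ c $ a * (X $ a $ b * Y $ b $ c)) =
      (\<Sum>i\<in>UNIV. \<Sum>j\<in>UNIV. \<Sum>k\<in>UNIV. Z $ i $ j * (X $ j $ k * Y $ k $ i))"
    by (subst (asm) sum.swap) (simp add: mult_ac)
  have uv: "(\<Sum>b\<in>UNIV. \<Sum>c\<in>UNIV. Z $ c $ b * (u $ b * cnj (v $ c))) =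
      (\<Sum>i\<in>UNIV. \<Sum>j\<in>UNIV. Z $ i $ j * (u $ j * cnj (v $ i)))"
    by (subst sum.swap) simp
  show ?thesis
    unfolding prin_sym_tau
    by (simp add: sum_UNIV_Plus sum_UNIV_Times tau_coeff_def cot_pt_def left_diff_distrib
        sum_subtractf if_distrib[of "\<lambda>x. x * _"] sum_if_const sum.delta sum.delta'
        matrix_matrix_mult_def distrib_left right_diff_distrib sum.distrib sum_distrib_left
        YX XY uv cong: if_cong)
qed

lemma tau_symbols_vanish_imp_bracket:
  fixes X Y :: "complex^'n::finite^'n" and u v :: "complex^'n"
  assumes "\<And>Z. prin_sym (tau Z) (cot_pt X u Y v) = 0"
  shows "mat_bracket X Y = (\<chi> i j. u $ i * cnj (v $ j))"
proof -
  define M where "M = Y ** X - X ** Y + (\<chi> i j. u $ i * cnj (v $ j))"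
  have "M $ i $ j = 0" for i j
  proof -
    text \<open>Pair with the matrix unit E_ji.\<close>
    define E :: "complex^'n^'n" where "E = (\<chi> a b. if a = j \<and> b = i then 1 else 0)"
    have "(\<Sum>a\<in>UNIV. \<Sum>b\<in>UNIV. E $ a $ b * M $ b $ a) = M $ i $ j"
      unfolding E_def by (simp add: sum_delta_pair if_distrib[of "\<lambda>x. x * _"] cong: if_cong)
    moreover have "(\<Sum>a\<in>UNIV. \<Sum>b\<in>UNIV. E $ a $ b * M $ b $ a) = 0"
      using assms[of E] unfolding prin_sym_tau_moment M_def by simp
    ultimately show ?thesis by simp
  qed
  then have "(X ** Y - Y ** X) $ i $ j = u $ i * cnj (v $ j)" for i j
    unfolding M_def by (simp add: algebra_simps)
  then show ?thesis
    unfolding mat_bracket_def by (simp add: Finite_Cartesian_Product.vec_eq_iff)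
qed


theorem mainTheorem10:
  fixes F :: "('n::finite \<times> 'n) diffop set"
  assumes "\<forall>P\<in>F. is_diffop P \<and> G_invariant P"
    and "HC_type F"
  shows "\<forall>X u Y v. cot_pt X u Y v \<in> char_var (left_ideal_gen (ext_g ` F \<union> range tau)) \<longrightarrow>
           nilpotent_mat Y \<and> mat_bracket X Y = (\<chi> i j. u $ i * cnj (v $ j))"
proof (intro allI impI conjI)
  fix X Y :: "complex^'n^'n" and u v :: "complex^'n"
  assume pt: "cot_pt X u Y v \<in> char_var (left_ideal_gen (ext_g ` F \<union> range tau))"
  have "\<forall>P\<in>F. prin_sym P (pt_g X Y) = 0"
  proof
    fix P assume "P \<in> F"
    then have "prin_sym (ext_g P) (cot_pt X u Y v) = 0"
      using char_var_generator[OF pt] assms(1) is_diffop_ext_g by blast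
    then show "prin_sym P (pt_g X Y) = 0" unfolding prin_sym_ext_g .
  qed
  then show "nilpotent_mat Y" using HC_type_imp_nilpotent[OF assms(2)] by blast
  have "prin_sym (tau Z) (cot_pt X u Y v) = 0" for Z
    using char_var_generator[OF pt] is_diffop_tau by blast
  then show "mat_bracket X Y = (\<chi> i j. u $ i * cnj (v $ j))"
    by (rule tau_symbols_vanish_imp_bracket)
qed

end
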